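(* Let $\Omega\subset\mathbb{R}^2$ be a bounded domain, $X\subset\overline{\Omega}$ finite with $X\setminus\partial\Omega\subset\mathrm{int}(\mathrm{conv}(X\cap\partial\Omega))$, $f_X$ a discrete load on $X$, $E_0,V_0>0$, and assume $\mathcal{Z}_X>0$. Let $(\mathbf{s},\mathbf{q},\mathbf{r})\in\mathbb{R}^{3\times m}$ solve $(\mathcal{P}_X)$ and $(\mathbf{u}_1,\mathbf{u}_2,\mathbf{w})\in\mathbb{R}^{3\times n}$ (with some slack vectors) solve $(\mathcal{P}_X^* )$. Then the pair $$\mathbf{z}=\tfrac12\mathbf{w},\qquad\mathbf{a}=\frac{V_0}{\mathcal{Z}_X}\mathbf{J}(\mathbf{z})\mathbf{s}$$ solves $(\mathrm{MCGS}_X)$ with $\mathcal{C}_{X,\min}=\frac{(\mathcal{Z}_X)^2}{2E_0V_0}$. Moreover, the vectors $$(\mathbf{u}_{1,el},\mathbf{u}_{2,el},\mathbf{w}_{el})=\frac{\mathcal{Z}_X}{E_0V_0}(\mathbf{u}_1,\mathbf{u}_2,\mathbf{w}),\qquad\hat{\mathbf{s}}=\mathbf{J}(\mathbf{z})\mathbf{s}$$ solve, respectively, the displacement-based problem defining $\mathcal{C}_X(\mathbf{z},\mathbf{a})$ and the stress-based problem for $(\mathbf{z},\mathbf{a})$. Each bar with $a_k\ne0$ undergoes the strain $\hat{\mathrm{e}}_k(\mathbf{u}_{1,el},\mathbf{u}_{2,el},\mathbf{w}_{el};\mathbf{z})=\mathcal{Z}_X/(E_0V_0)$, and for every bar $k$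 Hooke's law holds: $\hat s_k=(E_0a_k)\,\hat{\mathrm{e}}_k(\mathbf{u}_{1,el},\mathbf{u}_{2,el},\mathbf{w}_{el};\mathbf{z})$.
   Context: Discrete setting: $\bar n=\#X$, $n=\#(X\setminus\partial\Omega)$, enumeration $\chi:\{1,\dots,n\}\to X\setminus\partial\Omega$; $m=\bar n(\bar n-1)/2$, enumeration $k\mapsto\{\chi_-(k),\chi_+(k)\}$ of unordered pairs of distinct points of $X$. $f_i=f_X(\{\chi(i)\})$, $l_k=|\chi_+(k)-\chi_-(k)|$. Vectors in $\mathbb{R}^n$ are identified with functions on $X$ vanishing on $X\cap\partial\Omega$. $(\mathbf{B}_1\mathbf{u}_1+\mathbf{B}_2\mathbf{u}_2)_k=(u(\chi_+(k))-u(\chi_-(k)))\cdot(\chi_+(k)-\chi_-(k))/l_k$, $(\mathbf{D}\mathbf{w})_k=w(\chi_+(k))-w(\chi_-(k))$. $\mathrm{K}=\{(t_1,t_2,t_3):t_1,t_2\ge0,2t_1t_2\ge t_3^2\}$. $(\mathcal{P}_X)$: $\inf\{\mathbf{l}^\top\mathbf{s}+2\mathbf{l}^\top\mathbf{r}:\mathbf{s},\mathbf{r}\in\mathbb{R}^m_+,\mathbf{q}\in\mathbb{R}^m,\mathbf{B}_1^\top\mathbf{s}=\mathbf{B}_2^\top\mathbf{s}=\mathbf{0},\mathbf{D}^\top\mathbf{q}=\mathbf{f},(r_k,s_k,q_k)\in\mathrm{K}\ \forall k\}$; $(\mathcal{P}_X^* )$: $\sup\{\mathbf{f}^\top\mathbf{w}:\mathbf{t}_2+\mathbf{B}_1\mathbf{u}_1+\mathbf{B}_2\mathbf{u}_2=\mathbf{l},\mathbf{t}_3+\mathbf{D}\mathbf{w}=\mathbf{0},\mathbf{t}_1=2\mathbf{l},(t_{1;k},t_{2;k},t_{3;k})\in\mathrm{K}\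 \forall k\}$ over $\mathbf{u}_1,\mathbf{u}_2,\mathbf{w}\in\mathbb{R}^n$, $\mathbf{t}_1,\mathbf{t}_2\in\mathbb{R}^m_+$, $\mathbf{t}_3\in\mathbb{R}^m$; it is known $\min\mathcal{P}_X=\max\mathcal{P}_X^*=:\mathcal{Z}_X$. For $\mathbf{z}\in\mathbb{R}^n$: $\Delta_k(\mathbf{z})=(\mathbf{D}\mathbf{z})_k/l_k$, $\mathbf{J}(\mathbf{z})$ diagonal with $J_{kk}(\mathbf{z})=\sqrt{1+\Delta_k(\mathbf{z})^2}$, $\hat l_k(\mathbf{z})=J_{kk}(\mathbf{z})l_k$; $\mathrm{e}_k(\mathbf{u}_1,\mathbf{u}_2)=(\mathbf{B}_1\mathbf{u}_1+\mathbf{B}_2\mathbf{u}_2)_k/l_k$; $\hat{\mathrm{e}}_k(\mathbf{u}_1,\mathbf{u}_2,\mathbf{w};\mathbf{z})=(\mathrm{e}_k(\mathbf{u}_1,\mathbf{u}_2)+\Delta_k(\mathbf{z})\Delta_k(\mathbf{w}))/(1+\Delta_k(\mathbf{z})^2)$. Displacement-based compliance: $\mathcal{C}_X(\mathbf{z},\mathbf{a})=\sup_{\mathbf{u}_1,\mathbf{u}_2,\mathbf{w}}\{\mathbf{f}^\top\mathbf{w}-\frac{E_0}{2}\sum_k((\hat{\mathrm{e}}_k)_+)^2a_k\hat l_k(\mathbf{z})\}$. Stress-based problem: $\inf\{\frac{1}{2E_0}\sum_k\frac{\hat s_k^2}{a_k}\hat l_k(\mathbf{z}):\hat{\mathbf{s}}\in\mathbb{R}^m_+,\mathbf{B}_1^\top\mathbf{s}=\mathbf{B}_2^\top\mathbf{s}=\mathbf{0},\mathbf{D}^\top\mathbf{q}=\mathbf{f},s_k=\hat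 s_k/J_{kk}(\mathbf{z}),q_k=\Delta_k(\mathbf{z})\hat s_k/J_{kk}(\mathbf{z})\}$ (convention $0/0=0$, $c/0=+\infty$ for $c>0$), known to equal $\mathcal{C}_X(\mathbf{z},\mathbf{a})$. $(\mathrm{MCGS}_X)$: $\mathcal{C}_{X,\min}=\inf\{\mathcal{C}_X(\mathbf{z},\mathbf{a}):\mathbf{z}\in\mathbb{R}^n,\mathbf{a}\in\mathbb{R}^m_+,\sum_ka_k\hat l_k(\mathbf{z})\le V_0\}$. *)

theory Defs
  imports "HOL-Analysis.Analysis" "HOL-Library.Extended_Real"
begin

(* Points of the plane: real^2.
   Node vectors (elements of R^n) are identified with functions real^2 => real
   vanishing outside the set N = X - frontier Omega of free nodes.
   Bars: index k < m, endpoints cm k (= chi_-(k)) and cp k (= chi_+(k));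
   bar vectors (elements of R^m) are functions nat => real, only k < m matters. *)

definition nodevec :: "(real^2) set \<Rightarrow> (real^2 \<Rightarrow> real) \<Rightarrow> bool" where
  "nodevec N v \<longleftrightarrow> (\<forall>x. x \<notin> N \<longrightarrow> v x = 0)"

definition barlen :: "(nat \<Rightarrow> real^2) \<Rightarrow> (nat \<Rightarrow> real^2) \<Rightarrow> nat \<Rightarrow> real" where
  "barlen cm cp k = norm (cp k - cm k)"

definition inK :: "real \<Rightarrow> real \<Rightarrow> real \<Rightarrow> bool" where
  "inK t1 t2 t3 \<longleftrightarrow> t1 \<ge> 0 \<and> t2 \<ge> 0 \<and> 2 * t1 * t2 \<ge> t3 ^ 2"

definition B1 :: "(nat \<Rightarrow> real^2) \<Rightarrow> (nat \<Rightarrow> real^2) \<Rightarrow> (real^2 \<Rightarrow> real) \<Rightarrow> nat \<Rightarrow> real" where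
  "B1 cm cp u k = (u (cp k) - u (cm k)) * (cp k - cm k) $ 1 / barlen cm cp k"

definition B2 :: "(nat \<Rightarrow> real^2) \<Rightarrow> (nat \<Rightarrow> real^2) \<Rightarrow> (real^2 \<Rightarrow> real) \<Rightarrow> nat \<Rightarrow> real" where
  "B2 cm cp u k = (u (cp k) - u (cm k)) * (cp k - cm k) $ 2 / barlen cm cp k"

definition Dop :: "(nat \<Rightarrow> real^2) \<Rightarrow> (nat \<Rightarrow> real^2) \<Rightarrow> (real^2 \<Rightarrow> real) \<Rightarrow> nat \<Rightarrow> real" where
  "Dop cm cp w k = w (cp k) - w (cm k)"

definition B1T :: "nat \<Rightarrow> (nat \<Rightarrow> real^2) \<Rightarrow> (nat \<Rightarrow> real^2) \<Rightarrow> (nat \<Rightarrow> real) \<Rightarrow> real^2 \<Rightarrow> real" where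
  "B1T m cm cp s x = (\<Sum>k<m. s k * (of_bool (cp k = x) - of_bool (cm k = x)) * (cp k - cm k) $ 1 / barlen cm cp k)"

definition B2T :: "nat \<Rightarrow> (nat \<Rightarrow> real^2) \<Rightarrow> (nat \<Rightarrow> real^2) \<Rightarrow> (nat \<Rightarrow> real) \<Rightarrow> real^2 \<Rightarrow> real" where
  "B2T m cm cp s x = (\<Sum>k<m. s k * (of_bool (cp k = x) - of_bool (cm k = x)) * (cp k - cm k) $ 2 / barlen cm cp k)"

definition DT :: "nat \<Rightarrow> (nat \<Rightarrow> real^2) \<Rightarrow> (nat \<Rightarrow> real^2) \<Rightarrow> (nat \<Rightarrow> real) \<Rightarrow> real^2 \<Rightarrow> real" where
  "DT m cm cp q x = (\<Sum>k<m. q k * (of_bool (cp k = x) - of_bool (cm k = x)))"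

definition loadwork :: "(real^2) set \<Rightarrow> (real^2 \<Rightarrow> real) \<Rightarrow> (real^2 \<Rightarrow> real) \<Rightarrow> real" where
  "loadwork N f w = (\<Sum>x\<in>N. f x * w x)"

definition P_feas :: "nat \<Rightarrow> (nat \<Rightarrow> real^2) \<Rightarrow> (nat \<Rightarrow> real^2) \<Rightarrow> (real^2) set \<Rightarrow> (real^2 \<Rightarrow> real)
    \<Rightarrow> (nat \<Rightarrow> real) \<Rightarrow> (nat \<Rightarrow> real) \<Rightarrow> (nat \<Rightarrow> real) \<Rightarrow> bool" where
  "P_feas m cm cp N f s q r \<longleftrightarrow>
     (\<forall>k<m. s k \<ge> 0 \<and> r k \<ge> 0 \<and> inK (r k) (s k) (q k)) \<and>
     (\<forall>x\<in>N. B1T m cm cp s x = 0 \<and> B2T m cm cp s x = 0 \<and> DT m cm cp q x = f x)"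

definition P_obj :: "nat \<Rightarrow> (nat \<Rightarrow> real^2) \<Rightarrow> (nat \<Rightarrow> real^2) \<Rightarrow> (nat \<Rightarrow> real) \<Rightarrow> (nat \<Rightarrow> real) \<Rightarrow> real" where
  "P_obj m cm cp s r = (\<Sum>k<m. barlen cm cp k * s k) + 2 * (\<Sum>k<m. barlen cm cp k * r k)"

definition ZX :: "nat \<Rightarrow> (nat \<Rightarrow> real^2) \<Rightarrow> (nat \<Rightarrow> real^2) \<Rightarrow> (real^2) set \<Rightarrow> (real^2 \<Rightarrow> real) \<Rightarrow> real" where
  "ZX m cm cp N f = Inf {P_obj m cm cp s r | s q r. P_feas m cm cp N f s q r}"

definition Pd_feas :: "nat \<Rightarrow> (nat \<Rightarrow> real^2) \<Rightarrow> (nat \<Rightarrow> real^2) \<Rightarrow> (real^2) set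
    \<Rightarrow> (real^2 \<Rightarrow> real) \<Rightarrow> (real^2 \<Rightarrow> real) \<Rightarrow> (real^2 \<Rightarrow> real)
    \<Rightarrow> (nat \<Rightarrow> real) \<Rightarrow> (nat \<Rightarrow> real) \<Rightarrow> (nat \<Rightarrow> real) \<Rightarrow> bool" where
  "Pd_feas m cm cp N u1 u2 w t1 t2 t3 \<longleftrightarrow>
     nodevec N u1 \<and> nodevec N u2 \<and> nodevec N w \<and>
     (\<forall>k<m. t1 k \<ge> 0 \<and> t2 k \<ge> 0 \<and>
        t2 k + B1 cm cp u1 k + B2 cm cp u2 k = barlen cm cp k \<and>
        t3 k + Dop cm cp w k = 0 \<and>
        t1 k = 2 * barlen cm cp k \<and>
        inK (t1 k) (t2 k) (t3 k))"

definition Delta :: "(nat \<Rightarrow> real^2) \<Rightarrow> (nat \<Rightarrow> real^2) \<Rightarrow> (real^2 \<Rightarrow> real) \<Rightarrow> nat \<Rightarrow> real" where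
  "Delta cm cp z k = Dop cm cp z k / barlen cm cp k"

definition Jd :: "(nat \<Rightarrow> real^2) \<Rightarrow> (nat \<Rightarrow> real^2) \<Rightarrow> (real^2 \<Rightarrow> real) \<Rightarrow> nat \<Rightarrow> real" where
  "Jd cm cp z k = sqrt (1 + (Delta cm cp z k)^2)"

definition lhat :: "(nat \<Rightarrow> real^2) \<Rightarrow> (nat \<Rightarrow> real^2) \<Rightarrow> (real^2 \<Rightarrow> real) \<Rightarrow> nat \<Rightarrow> real" where
  "lhat cm cp z k = Jd cm cp z k * barlen cm cp k"

definition strain :: "(nat \<Rightarrow> real^2) \<Rightarrow> (nat \<Rightarrow> real^2) \<Rightarrow> (real^2 \<Rightarrow> real) \<Rightarrow> (real^2 \<Rightarrow> real) \<Rightarrow> nat \<Rightarrow> real" where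
  "strain cm cp u1 u2 k = (B1 cm cp u1 k + B2 cm cp u2 k) / barlen cm cp k"

definition strainhat :: "(nat \<Rightarrow> real^2) \<Rightarrow> (nat \<Rightarrow> real^2) \<Rightarrow> (real^2 \<Rightarrow> real) \<Rightarrow> (real^2 \<Rightarrow> real)
    \<Rightarrow> (real^2 \<Rightarrow> real) \<Rightarrow> (real^2 \<Rightarrow> real) \<Rightarrow> nat \<Rightarrow> real" where
  "strainhat cm cp u1 u2 w z k =
     (strain cm cp u1 u2 k + Delta cm cp z k * Delta cm cp w k) / (1 + (Delta cm cp z k)^2)"

definition disp_obj :: "nat \<Rightarrow> (nat \<Rightarrow> real^2) \<Rightarrow> (nat \<Rightarrow> real^2) \<Rightarrow> (real^2) set \<Rightarrow> (real^2 \<Rightarrow> real) \<Rightarrow> real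
    \<Rightarrow> (real^2 \<Rightarrow> real) \<Rightarrow> (nat \<Rightarrow> real)
    \<Rightarrow> (real^2 \<Rightarrow> real) \<Rightarrow> (real^2 \<Rightarrow> real) \<Rightarrow> (real^2 \<Rightarrow> real) \<Rightarrow> real" where
  "disp_obj m cm cp N f E0 z a u1 u2 w =
     loadwork N f w
     - E0 / 2 * (\<Sum>k<m. (max 0 (strainhat cm cp u1 u2 w z k))^2 * a k * lhat cm cp z k)"

definition compliance :: "nat \<Rightarrow> (nat \<Rightarrow> real^2) \<Rightarrow> (nat \<Rightarrow> real^2) \<Rightarrow> (real^2) set \<Rightarrow> (real^2 \<Rightarrow> real) \<Rightarrow> real
    \<Rightarrow> (real^2 \<Rightarrow> real) \<Rightarrow> (nat \<Rightarrow> real) \<Rightarrow> ereal" where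
  "compliance m cm cp N f E0 z a =
     (SUP uw \<in> {(u1, u2, w). nodevec N u1 \<and> nodevec N u2 \<and> nodevec N w}.
        ereal (case uw of (u1, u2, w) \<Rightarrow> disp_obj m cm cp N f E0 z a u1 u2 w))"

definition qdiv :: "real \<Rightarrow> real \<Rightarrow> ereal" where
  "qdiv c d = (if d = 0 then (if c = 0 then 0 else \<infinity>) else ereal (c / d))"

definition stress_feas :: "nat \<Rightarrow> (nat \<Rightarrow> real^2) \<Rightarrow> (nat \<Rightarrow> real^2) \<Rightarrow> (real^2) set \<Rightarrow> (real^2 \<Rightarrow> real)
    \<Rightarrow> (real^2 \<Rightarrow> real) \<Rightarrow> (nat \<Rightarrow> real) \<Rightarrow> bool" where
  "stress_feas m cm cp N f z sh \<longleftrightarrow>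
     (\<forall>k<m. sh k \<ge> 0) \<and>
     (let s = (\<lambda>k. sh k / Jd cm cp z k);
          q = (\<lambda>k. Delta cm cp z k * sh k / Jd cm cp z k)
      in \<forall>x\<in>N. B1T m cm cp s x = 0 \<and> B2T m cm cp s x = 0 \<and> DT m cm cp q x = f x)"

definition stress_obj :: "nat \<Rightarrow> (nat \<Rightarrow> real^2) \<Rightarrow> (nat \<Rightarrow> real^2) \<Rightarrow> real
    \<Rightarrow> (real^2 \<Rightarrow> real) \<Rightarrow> (nat \<Rightarrow> real) \<Rightarrow> (nat \<Rightarrow> real) \<Rightarrow> ereal" where
  "stress_obj m cm cp E0 z a sh =
     ereal (1 / (2 * E0)) * (\<Sum>k<m. qdiv ((sh k)^2) (a k) * ereal (lhat cm cp z k))"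

definition MCGS_feas :: "nat \<Rightarrow> (nat \<Rightarrow> real^2) \<Rightarrow> (nat \<Rightarrow> real^2) \<Rightarrow> (real^2) set \<Rightarrow> real
    \<Rightarrow> (real^2 \<Rightarrow> real) \<Rightarrow> (nat \<Rightarrow> real) \<Rightarrow> bool" where
  "MCGS_feas m cm cp N V0 z a \<longleftrightarrow>
     nodevec N z \<and> (\<forall>k<m. a k \<ge> 0) \<and> (\<Sum>k<m. a k * lhat cm cp z k) \<le> V0"

definition Cmin :: "nat \<Rightarrow> (nat \<Rightarrow> real^2) \<Rightarrow> (nat \<Rightarrow> real^2) \<Rightarrow> (real^2) set \<Rightarrow> (real^2 \<Rightarrow> real)
    \<Rightarrow> real \<Rightarrow> real \<Rightarrow> ereal" where
  "Cmin m cm cp N f E0 V0 =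
     (INF za \<in> {(z, a). MCGS_feas m cm cp N V0 z a}. compliance m cm cp N f E0 (fst za) (snd za))"

end

theory Submission
  imports Defs
begin

(* The dual problem maximises f.w over the displacements for which every bar satisfies
   D_k(w)^2 <= 4 l_k (l_k - (B u)_k).  This convex problem is strictly feasible at 0 (Slater),
   so Farkas' lemma yields KKT multipliers at a dual optimum, and these form a primal point
   with the same value: strong duality.  Complementary slackness in the cones K then gives,
   bar by bar, q = Delta(w/2) s and l J^2 s = l s + 2 l r, and strain hat-e(u, w; w/2) = 1 on
   bars with s > 0; dual feasibility alone gives hat-e(u, w; z) <= 1 for every shape z.
   For z = w/2 and a proportional to J s, the stress J s is statically admissible with
   stress energy Z^2 / (2 E0 V0), which bounds the compliance of (z, a) from above.
   Conversely, for every feasible design the dual displacements scaled by Z / (E0 V0) have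
   strains at most Z / (E0 V0), hence potential energy at least Z^2 / (2 E0 V0).  The two
   bounds meet, and every optimality claim follows. *)

section \<open>Farkas' lemma\<close>

text \<open>\<open>comb c x y\<close> stands for \<open>x - c y\<close>: only closure of \<open>V\<close> under it is needed, which
  lets Farkas' lemma run on triples of node functions, a type without a \<open>real_vector\<close> instance.\<close>

definition comb_linear_on :: "'v set \<Rightarrow> (real \<Rightarrow> 'v \<Rightarrow> 'v \<Rightarrow> 'v) \<Rightarrow> ('v \<Rightarrow> real) \<Rightarrow> bool" where
  "comb_linear_on V comb g \<longleftrightarrow> (\<forall>c. \<forall>x\<in>V. \<forall>y\<in>V. g (comb c x y) = g x - c * g y)"

definition farkas_dichotomy :: "'v set \<Rightarrow> nat \<Rightarrow> (nat \<Rightarrow> 'v \<Rightarrow> real) \<Rightarrow> ('v \<Rightarrow> real) \<Rightarrow> bool" where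
  "farkas_dichotomy V m a \<phi> \<longleftrightarrow>
     (\<exists>y. (\<forall>i<m. 0 \<le> y i) \<and> (\<forall>x\<in>V. \<phi> x = (\<Sum>i<m. y i * a i x))) \<or>
     (\<exists>x\<in>V. (\<forall>i<m. 0 \<le> a i x) \<and> \<phi> x < 0)"

lemma comb_linear_on_diff_scaled:
  assumes "comb_linear_on V comb g" "comb_linear_on V comb h"
  shows "comb_linear_on V comb (\<lambda>v. g v - c * h v)"
  unfolding comb_linear_on_def
proof (intro allI ballI)
  fix c' x y assume "x \<in> V" "y \<in> V"
  then have lin: "g (comb c' x y) = g x - c' * g y" "h (comb c' x y) = h x - c' * h y"
    using assms by (simp_all add: comb_linear_on_def)
  show "g (comb c' x y) - c * h (comb c' x y) = g x - c * h x - c' * (g y - c * h y)"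
    unfolding lin by (simp add: algebra_simps)
qed

lemma farkas_eliminate:
  fixes x :: 'v
  assumes closed: "\<And>c x y. x \<in> V \<Longrightarrow> y \<in> V \<Longrightarrow> comb c x y \<in> V"
    and a_lin: "\<forall>i<Suc m. comb_linear_on V comb (a i)" and \<phi>_lin: "comb_linear_on V comb \<phi>"
    and IH: "\<And>a \<phi>. \<forall>i<m. comb_linear_on V comb (a i) \<Longrightarrow> comb_linear_on V comb \<phi> \<Longrightarrow>
      farkas_dichotomy V m a \<phi>"
    and x: "x \<in> V" "\<forall>i<m. 0 \<le> a i x" "\<phi> x < 0" "a m x < 0"
  shows "farkas_dichotomy V (Suc m) a \<phi>"
proof -
  \<comment> \<open>Fourier-Motzkin: eliminate the last constraint along x, where it is negative\<close>
  define a' where "a' = (\<lambda>i v. a i v - a i x / a m x * a m v)"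
  define \<phi>' where "\<phi>' = (\<lambda>v. \<phi> v - \<phi> x / a m x * a m v)"
  have "farkas_dichotomy V m a' \<phi>'"
  proof (rule IH)
    show "\<forall>i<m. comb_linear_on V comb (a' i)"
      unfolding a'_def using a_lin by (intro allI impI comb_linear_on_diff_scaled) auto
    show "comb_linear_on V comb \<phi>'"
      unfolding \<phi>'_def using a_lin \<phi>_lin by (intro comb_linear_on_diff_scaled) auto
  qed
  from this[unfolded farkas_dichotomy_def] show ?thesis
  proof (elim disjE exE conjE bexE)
    fix y assume y: "\<forall>i<m. 0 \<le> y i" "\<forall>v\<in>V. \<phi>' v = (\<Sum>i<m. y i * a' i v)"
    define ym where "ym = (\<phi> x - (\<Sum>i<m. y i * a i x)) / a m x"
    have "0 \<le> (\<Sum>i<m. y i * a i x)" using y(1) x(2) by (intro sum_nonneg) auto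
    then have "0 \<le> ym" using x(3,4) by (simp add: ym_def divide_nonpos_neg)
    moreover have "\<phi> v = (\<Sum>i<m. y i * a i v) + ym * a m v" if "v \<in> V" for v
    proof -
      have "\<phi>' v = (\<Sum>i<m. y i * a i v) - (\<Sum>i<m. y i * a i x) / a m x * a m v"
        using y(2) that by (simp add: a'_def right_diff_distrib sum_subtractf
            sum_distrib_right sum_divide_distrib mult.assoc)
      then show ?thesis by (simp add: \<phi>'_def ym_def diff_divide_distrib algebra_simps)
    qed
    moreover have "(\<Sum>i<m. (y(m := ym)) i * a i v) = (\<Sum>i<m. y i * a i v)" for v
      by (rule sum.cong) auto
    ultimately show ?thesis
      unfolding farkas_dichotomy_def
      using y(1) by (intro disjI1 exI[of _ "y(m := ym)"]) (simp add: less_Suc_eq)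
  next
    fix v assume v: "v \<in> V" "\<forall>i<m. 0 \<le> a' i v" "\<phi>' v < 0"
    define v' where "v' = comb (a m v / a m x) v x"
    have "a i v' = a' i v" if "i < Suc m" for i
      using a_lin that v(1) x(1) by (simp add: comb_linear_on_def v'_def a'_def)
    moreover have "a' m v = 0" using x(4) by (simp add: a'_def)
    ultimately have "\<forall>i<Suc m. 0 \<le> a i v'" using v(2) by (simp add: less_Suc_eq)
    moreover have "\<phi> v' = \<phi>' v"
      using \<phi>_lin v(1) x(1) by (simp add: comb_linear_on_def v'_def \<phi>'_def)
    moreover have "v' \<in> V" using closed v(1) x(1) by (simp add: v'_def)
    ultimately show ?thesis
      unfolding farkas_dichotomy_def using v(3) by (intro disjI2 bexI[of _ v']) simp_all
  qed
qed

lemma farkas_alternative: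
  assumes closed: "\<And>c x y. x \<in> V \<Longrightarrow> y \<in> V \<Longrightarrow> comb c x y \<in> V"
    and "\<forall>i<m. comb_linear_on V comb (a i)" and "comb_linear_on V comb \<phi>"
  shows "farkas_dichotomy V m a \<phi>"
  using assms(2,3)
proof (induction m arbitrary: a \<phi>)
  case 0
  show ?case
  proof (cases "\<forall>x\<in>V. \<phi> x = 0")
    case False
    then obtain x where x: "x \<in> V" "\<phi> x \<noteq> 0" by auto
    \<comment> \<open>\<open>x'\<close> plays the role of \<open>-x\<close>\<close>
    define x' where "x' = comb 1 (comb 1 x x) x"
    have "x' \<in> V" "\<phi> x' = - \<phi> x"
      using "0.prems"(2) closed x(1) by (simp_all add: x'_def comb_linear_on_def)
    then have "\<exists>v\<in>V. \<phi> v < 0"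
      using x by (cases "\<phi> x < 0") (auto intro: bexI[of _ x'])
    then show ?thesis by (simp add: farkas_dichotomy_def)
  qed (simp add: farkas_dichotomy_def)
next
  case (Suc m)
  have "farkas_dichotomy V m a \<phi>" using Suc by simp
  from this[unfolded farkas_dichotomy_def] show ?case
  proof (elim disjE exE conjE bexE)
    fix y assume y: "\<forall>i<m. 0 \<le> y i" "\<forall>x\<in>V. \<phi> x = (\<Sum>i<m. y i * a i x)"
    have "(\<Sum>i<m. (y(m := 0)) i * a i x) = (\<Sum>i<m. y i * a i x)" for x
      by (rule sum.cong) auto
    then show ?thesis
      unfolding farkas_dichotomy_def
      using y by (intro disjI1 exI[of _ "y(m := 0)"]) (simp add: less_Suc_eq)
  next
    fix x assume x: "x \<in> V" "\<forall>i<m. 0 \<le> a i x" "\<phi> x < 0"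
    show ?thesis
    proof (cases "0 \<le> a m x")
      case True
      then show ?thesis
        unfolding farkas_dichotomy_def using x
        by (intro disjI2 bexI[of _ x]) (auto simp: less_Suc_eq)
    next
      case False
      show ?thesis
      proof (rule farkas_eliminate[where comb = comb and V = V and x = x])
        fix a' \<phi>' assume "\<forall>i<m. comb_linear_on V comb (a' i)" "comb_linear_on V comb \<phi>'"
        then show "farkas_dichotomy V m a' \<phi>'" by (rule Suc.IH)
      qed (use closed Suc.prems x False in auto)
    qed
  qed
qed

section \<open>The cone K\<close>

lemma inK_inner_nonneg:
  assumes "inK r s q" "inK t1 t2 t3"
  shows "0 \<le> r * t1 + s * t2 + q * t3"
proof -
  have K: "0 \<le> r" "0 \<le> s" "q^2 \<le> 2 * r * s" "0 \<le> t1" "0 \<le> t2" "t3^2 \<le> 2 * t1 * t2"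
    using assms by (auto simp: inK_def)
  have "(q * t3)^2 = q^2 * t3^2" by (simp add: power_mult_distrib)
  also have "\<dots> \<le> (2 * r * s) * (2 * t1 * t2)" using K by (intro mult_mono) auto
  also have "\<dots> \<le> (r * t1 + s * t2)^2"
    using zero_le_power2[of "r * t1 - s * t2"] by (simp add: power2_eq_square algebra_simps)
  finally have "\<bar>q * t3\<bar> \<le> \<bar>r * t1 + s * t2\<bar>" using abs_le_square_iff by blast
  moreover have "0 \<le> r * t1 + s * t2" using K by simp
  ultimately show ?thesis by linarith
qed

lemma inK_complementarity:
  assumes "inK r s q" "inK t1 t2 t3" "0 < t1" "r * t1 + s * t2 + q * t3 = 0"
  shows "q * t1 + s * t3 = 0" "2 * r * t1^2 = s * t3^2" "0 < s \<Longrightarrow> t3^2 = 2 * t1 * t2"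
proof -
  have K: "0 \<le> r" "0 \<le> s" "q^2 \<le> 2 * r * s" "0 \<le> t1" "0 \<le> t2" "t3^2 \<le> 2 * t1 * t2"
    using assms by (auto simp: inK_def)
  define A where "A = r * t1"
  define B where "B = s * t2"
  \<comment> \<open>equality in the AM-GM step of \<open>inK_inner_nonneg\<close> forces \<open>A = B\<close>\<close>
  have "(A + B)^2 = q^2 * t3^2"
    using assms(4) by (simp add: A_def B_def power_mult_distrib eq_neg_iff_add_eq_0[symmetric])
  also have "\<dots> \<le> (2 * r * s) * (2 * t1 * t2)" using K by (intro mult_mono) auto
  also have "\<dots> = 4 * A * B" by (simp add: A_def B_def)
  finally have "(A - B)^2 \<le> 0" by (simp add: power2_eq_square algebra_simps)
  then have balance: "A = B" by simp
  have qt3: "q * t3 = - 2 * r * t1" using assms(4) balance by (simp add: A_def B_def)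
  have "q^2 * t1^2 \<le> 2 * r * s * t1^2" using K by (intro mult_right_mono) auto
  moreover have "s^2 * t3^2 \<le> 2 * r * s * t1^2"
  proof -
    have "s^2 * t3^2 \<le> s^2 * (2 * t1 * t2)" using K by (intro mult_left_mono) auto
    also have "\<dots> = 2 * s * t1 * B" by (simp add: B_def power2_eq_square)
    also have "\<dots> = 2 * r * s * t1^2" using balance by (simp add: A_def power2_eq_square)
    finally show ?thesis .
  qed
  moreover have "(q * t1 + s * t3)^2 = q^2 * t1^2 + 2 * s * t1 * (q * t3) + s^2 * t3^2"
    by (simp add: power2_eq_square algebra_simps)
  ultimately have "(q * t1 + s * t3)^2 \<le> 0"
    using qt3 by (simp add: power2_eq_square algebra_simps)
  then show qs: "q * t1 + s * t3 = 0" by simp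
  have st3_eq: "s * t3 = - (q * t1)" using qs by linarith
  have "s * t3^2 = (s * t3) * t3" by (simp add: power2_eq_square)
  also have "\<dots> = - t1 * (q * t3)" unfolding st3_eq by (simp add: mult_ac)
  finally have "s * t3^2 = - t1 * (q * t3)" .
  then show st3: "2 * r * t1^2 = s * t3^2" using qt3 by (simp add: power2_eq_square)
  assume "0 < s"
  have "s * t3^2 = 2 * t1 * A" using st3 by (simp add: A_def power2_eq_square mult_ac)
  then have "s * t3^2 = s * (2 * t1 * t2)" using balance by (simp add: B_def mult_ac)
  then show "t3^2 = 2 * t1 * t2" using \<open>0 < s\<close> by simp
qed

lemma inK_dual_iff:
  fixes l b d :: real
  assumes "0 < l"
  shows "inK (2 * l) (l - b) (- d) \<longleftrightarrow> 0 \<le> 4 * l * (l - b) - d^2"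
proof -
  have "0 \<le> l - b" if "0 \<le> 4 * l * (l - b) - d^2"
  proof -
    have "0 \<le> (4 * l) * (l - b)" using that zero_le_power2[of d] by linarith
    then show ?thesis using assms by (simp add: zero_le_mult_iff)
  qed
  then show ?thesis using assms by (auto simp: inK_def)
qed

lemma eventually_quadratic_nonneg:
  fixes h g c :: real
  assumes "0 \<le> h" and "h = 0 \<Longrightarrow> 0 < g"
  shows "eventually (\<lambda>t. 0 \<le> h + t * g - t^2 * c) (at_right 0)"
proof (cases "h = 0")
  case True
  have "((\<lambda>t. g - t * c) \<longlongrightarrow> g) (at_right 0)"
    by (auto intro!: tendsto_eq_intros)
  then have "eventually (\<lambda>t. 0 < g - t * c) (at_right 0)"
    using assms(2)[OF True] by (rule order_tendstoD)
  with eventually_at_right_less show ?thesis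
  proof eventually_elim
    case (elim t)
    then have "0 \<le> t * (g - t * c)" by simp
    then show ?case using True by (simp add: power2_eq_square algebra_simps)
  qed
next
  case False
  have "((\<lambda>t. h + t * g - t^2 * c) \<longlongrightarrow> h) (at_right 0)"
    by (auto intro!: tendsto_eq_intros)
  then have "eventually (\<lambda>t. 0 < h + t * g - t^2 * c) (at_right 0)"
    using assms(1) False by (intro order_tendstoD) auto
  then show ?thesis by eventually_elim simp
qed

lemma bar_energy_le:
  fixes sh a e E0 :: real
  assumes "0 \<le> sh" "0 < a" "0 < E0"
  shows "sh * e - E0 / 2 * (max 0 e)^2 * a \<le> sh^2 / (2 * E0 * a)"
proof -
  define x where "x = max 0 e"
  have "sh * e \<le> sh * x" using assms(1) by (simp add: x_def mult_left_mono)
  moreover have "sh * x - E0 / 2 * x^2 * a \<le> sh^2 / (2 * E0 * a)"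
    using zero_le_power2[of "sh - E0 * a * x"] assms(2,3)
    by (simp add: field_simps power2_eq_square)
  ultimately show ?thesis by (simp add: x_def)
qed

lemma bar_energy_le_qdiv:
  fixes sh a e E0 lh :: real
  assumes "0 \<le> sh" "0 \<le> a" "0 \<le> lh" "0 < E0"
  shows "ereal (lh * (sh * e - E0 / 2 * (max 0 e)^2 * a))
    \<le> ereal (1 / (2 * E0)) * (qdiv (sh^2) a * ereal lh)"
proof (cases "a = 0")
  case False
  then have "lh * (sh * e - E0 / 2 * (max 0 e)^2 * a) \<le> 1 / (2 * E0) * (sh^2 / a * lh)"
    using bar_energy_le[of sh a E0 e] assms mult_left_mono by (fastforce simp: field_simps)
  then show ?thesis using False by (simp add: qdiv_def)
next
  case True
  then show ?thesis using assms by (cases "lh = 0") (auto simp: qdiv_def)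
qed

lemma sum_incidence_mult:
  assumes "finite N" "nodevec N v"
  shows "(\<Sum>x\<in>N. (\<Sum>k<m. c k * (of_bool (cp k = x) - of_bool (cm k = x))) * v x)
         = (\<Sum>k<m. c k * (v (cp k) - v (cm k)))"
proof -
  have delta: "(\<Sum>x\<in>N. of_bool (p = x) * v x) = v p" for p
    using assms by (cases "p \<in> N") (auto simp: nodevec_def if_distrib sum.delta cong: if_cong)
  have "(\<Sum>x\<in>N. (\<Sum>k<m. c k * (of_bool (cp k = x) - of_bool (cm k = x))) * v x)
      = (\<Sum>k<m. c k * ((\<Sum>x\<in>N. of_bool (cp k = x) * v x) - (\<Sum>x\<in>N. of_bool (cm k = x) * v x)))"
    by (simp add: sum_distrib_left sum_distrib_right sum_subtractf algebra_simps sum.swap[of _ N])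
  then show ?thesis by (simp add: delta)
qed

lemma sum_DT_mult:
  assumes "finite N" "nodevec N v"
  shows "(\<Sum>x\<in>N. DT m cm cp q x * v x) = (\<Sum>k<m. q k * Dop cm cp v k)"
  unfolding DT_def Dop_def by (rule sum_incidence_mult[OF assms])

lemma sum_B1T_mult:
  assumes "finite N" "nodevec N v"
  shows "(\<Sum>x\<in>N. B1T m cm cp s x * v x) = (\<Sum>k<m. s k * B1 cm cp v k)"
  using sum_incidence_mult[OF assms, where m = m and cm = cm and cp = cp
      and c = "\<lambda>k. s k * (cp k - cm k) $ 1 / barlen cm cp k"]
  unfolding B1T_def B1_def by (simp add: algebra_simps)

lemma sum_B2T_mult:
  assumes "finite N" "nodevec N v"
  shows "(\<Sum>x\<in>N. B2T m cm cp s x * v x) = (\<Sum>k<m. s k * B2 cm cp v k)"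
  using sum_incidence_mult[OF assms, where m = m and cm = cm and cp = cp
      and c = "\<lambda>k. s k * (cp k - cm k) $ 2 / barlen cm cp k"]
  unfolding B2T_def B2_def by (simp add: algebra_simps)

lemma loadwork_add_scaled: "loadwork N f (\<lambda>p. x p + c * y p) = loadwork N f x + c * loadwork N f y"
  unfolding loadwork_def by (simp add: algebra_simps sum.distrib sum_distrib_left)

lemma loadwork_scale: "loadwork N f (\<lambda>p. c * y p) = c * loadwork N f y"
  unfolding loadwork_def by (simp add: algebra_simps sum_distrib_left)

lemma loadwork_diff_scaled: "loadwork N f (\<lambda>p. x p - c * y p) = loadwork N f x - c * loadwork N f y"
  unfolding loadwork_def by (simp add: algebra_simps sum_subtractf sum_distrib_left)

lemma Jd_pos: "0 < Jd cm cp z k"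
  by (simp add: Jd_def add_pos_nonneg)

lemma Jd_sq: "(Jd cm cp z k)^2 = 1 + (Delta cm cp z k)^2"
  by (simp add: Jd_def add_nonneg_nonneg)

lemma lhat_nonneg: "0 \<le> lhat cm cp z k"
  by (simp add: lhat_def Jd_def barlen_def)

lemma Delta_half: "Delta cm cp (\<lambda>x. w x / 2) k = Delta cm cp w k / 2"
  by (simp add: Delta_def Dop_def diff_divide_distrib)

lemma strainhat_scale:
  "strainhat cm cp (\<lambda>x. c * u1 x) (\<lambda>x. c * u2 x) (\<lambda>x. c * w x) z k =
    c * strainhat cm cp u1 u2 w z k"
  unfolding strainhat_def strain_def Delta_def B1_def B2_def Dop_def
  by (simp add: divide_inverse algebra_simps)

lemma disp_obj_ge:
  assumes "\<forall>k<m. 0 \<le> a k" "(\<Sum>k<m. a k * lhat cm cp z k) \<le> V0" "0 < E0" "0 \<le> c"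
    and "\<forall>k<m. strainhat cm cp u1 u2 w z k \<le> c"
  shows "loadwork N f w - E0 / 2 * c^2 * V0 \<le> disp_obj m cm cp N f E0 z a u1 u2 w"
proof -
  have "(\<Sum>k<m. (max 0 (strainhat cm cp u1 u2 w z k))^2 * a k * lhat cm cp z k)
      \<le> (\<Sum>k<m. c^2 * (a k * lhat cm cp z k))"
  proof (rule sum_mono)
    fix k assume "k \<in> {..<m}"
    then have "(max 0 (strainhat cm cp u1 u2 w z k))^2 \<le> c^2" "0 \<le> a k * lhat cm cp z k"
      using assms(1,4,5) lhat_nonneg by (auto intro!: power_mono)
    then show "(max 0 (strainhat cm cp u1 u2 w z k))^2 * a k * lhat cm cp z k
        \<le> c^2 * (a k * lhat cm cp z k)"
      by (metis mult.assoc mult_right_mono)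
  qed
  also have "\<dots> \<le> c^2 * V0" using assms(2) by (simp add: mult_left_mono flip: sum_distrib_left)
  finally show ?thesis using assms(3) by (simp add: disp_obj_def)
qed

lemma bars_barlen_pos:
  assumes "bij_betw (\<lambda>k. {cm k, cp k}) {..<m} {{x, y} | x y. x \<in> X \<and> y \<in> X \<and> x \<noteq> y}"
    and "k < m"
  shows "0 < barlen cm cp k"
proof -
  have "{cm k, cp k} \<in> {{x, y} | x y. x \<in> X \<and> y \<in> X \<and> x \<noteq> y}"
    using assms by (auto dest: bij_betwE)
  then have "cm k \<noteq> cp k" by (auto simp: doubleton_eq_iff)
  then show ?thesis by (simp add: barlen_def)
qed

section \<open>Duality on the ground structure\<close>

locale ground_structure =
  fixes m :: nat and cm cp :: "nat \<Rightarrow> real^2" and N :: "(real^2) set" and f :: "real^2 \<Rightarrow> real"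
  assumes finite_free_nodes: "finite N"
    and barlen_pos: "k < m \<Longrightarrow> 0 < barlen cm cp k"
begin

abbreviation admissible :: "(real^2 \<Rightarrow> real) \<Rightarrow> (real^2 \<Rightarrow> real) \<Rightarrow> (real^2 \<Rightarrow> real) \<Rightarrow> bool" where
  "admissible u1 u2 w \<equiv> nodevec N u1 \<and> nodevec N u2 \<and> nodevec N w"

definition internal_work :: "(nat \<Rightarrow> real) \<Rightarrow> (nat \<Rightarrow> real)
    \<Rightarrow> (real^2 \<Rightarrow> real) \<Rightarrow> (real^2 \<Rightarrow> real) \<Rightarrow> (real^2 \<Rightarrow> real) \<Rightarrow> real" where
  "internal_work s q u1 u2 w =
     (\<Sum>k<m. s k * (B1 cm cp u1 k + B2 cm cp u2 k) + q k * Dop cm cp w k)"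

lemma equilibrium_iff_virtual_work:
  "(\<forall>x\<in>N. B1T m cm cp s x = 0 \<and> B2T m cm cp s x = 0 \<and> DT m cm cp q x = f x) \<longleftrightarrow>
   (\<forall>u1 u2 w. admissible u1 u2 w \<longrightarrow> internal_work s q u1 u2 w = loadwork N f w)"
proof (intro iffI allI impI ballI conjI)
  fix u1 u2 w
  assume eq: "\<forall>x\<in>N. B1T m cm cp s x = 0 \<and> B2T m cm cp s x = 0 \<and> DT m cm cp q x = f x"
    and adm: "admissible u1 u2 w"
  have "(\<Sum>k<m. s k * B1 cm cp u1 k) = 0" "(\<Sum>k<m. s k * B2 cm cp u2 k) = 0"
    using eq adm
    by (simp_all flip: sum_B1T_mult[OF finite_free_nodes] sum_B2T_mult[OF finite_free_nodes])
  moreover have "(\<Sum>k<m. q k * Dop cm cp w k) = loadwork N f w"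
    using eq adm by (simp add: loadwork_def flip: sum_DT_mult[OF finite_free_nodes])
  ultimately show "internal_work s q u1 u2 w = loadwork N f w"
    by (simp add: internal_work_def distrib_left sum.distrib)
next
  fix x assume vw: "\<forall>u1 u2 w. admissible u1 u2 w \<longrightarrow> internal_work s q u1 u2 w = loadwork N f w"
    and x: "x \<in> N"
  define \<delta> :: "real^2 \<Rightarrow> real" where "\<delta> = (\<lambda>p. of_bool (p = x))"
  have adm: "nodevec N \<delta>" "nodevec N (\<lambda>_. 0)" using x by (auto simp: nodevec_def \<delta>_def)
  have pick: "(\<Sum>y\<in>N. g y * \<delta> y) = g x" for g :: "real^2 \<Rightarrow> real"
    using x finite_free_nodes by (simp add: \<delta>_def if_distrib sum.delta' cong: if_cong)
  have "B1T m cm cp s x = internal_work s q \<delta> (\<lambda>_. 0) (\<lambda>_. 0)"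
    using sum_B1T_mult[OF finite_free_nodes adm(1)]
    by (simp add: pick internal_work_def B2_def Dop_def)
  then show "B1T m cm cp s x = 0" using vw adm by (simp add: loadwork_def)
  have "B2T m cm cp s x = internal_work s q (\<lambda>_. 0) \<delta> (\<lambda>_. 0)"
    using sum_B2T_mult[OF finite_free_nodes adm(1)]
    by (simp add: pick internal_work_def B1_def Dop_def)
  then show "B2T m cm cp s x = 0" using vw adm by (simp add: loadwork_def)
  have "DT m cm cp q x = internal_work s q (\<lambda>_. 0) (\<lambda>_. 0) \<delta>"
    using sum_DT_mult[OF finite_free_nodes adm(1)]
    by (simp add: pick internal_work_def B1_def B2_def)
  moreover have "loadwork N f \<delta> = f x" using pick by (simp add: loadwork_def)
  ultimately show "DT m cm cp q x = f x" using vw adm by simp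
qed

lemma P_feas_virtual_work:
  assumes "P_feas m cm cp N f s q r" "admissible u1 u2 w"
  shows "internal_work s q u1 u2 w = loadwork N f w"
  using assms equilibrium_iff_virtual_work by (simp add: P_feas_def)

text \<open>\<open>0 \<le> dual_slack u1 u2 w k\<close> is the cone constraint of bar \<open>k\<close> in \<open>(P_X^*)\<close> after
  eliminating the slack variables \<open>t1 = 2 l\<close>, \<open>t2 = l - (B u)\<close>, \<open>t3 = - D w\<close>.\<close>

definition dual_slack :: "(real^2 \<Rightarrow> real) \<Rightarrow> (real^2 \<Rightarrow> real) \<Rightarrow> (real^2 \<Rightarrow> real) \<Rightarrow> nat \<Rightarrow> real" where
  "dual_slack u1 u2 w k =
     4 * barlen cm cp k * (barlen cm cp k - (B1 cm cp u1 k + B2 cm cp u2 k)) - (Dop cm cp w k)^2"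

definition dual_feasible :: "(real^2 \<Rightarrow> real) \<Rightarrow> (real^2 \<Rightarrow> real) \<Rightarrow> (real^2 \<Rightarrow> real) \<Rightarrow> bool" where
  "dual_feasible u1 u2 w \<longleftrightarrow> admissible u1 u2 w \<and> (\<forall>k<m. 0 \<le> dual_slack u1 u2 w k)"

lemma dual_feasible_inK:
  assumes "dual_feasible u1 u2 w" "k < m"
  shows "inK (2 * barlen cm cp k) (barlen cm cp k - (B1 cm cp u1 k + B2 cm cp u2 k))
    (- Dop cm cp w k)"
  using assms inK_dual_iff[OF barlen_pos[OF assms(2)]] by (simp add: dual_feasible_def dual_slack_def)

lemma Pd_feas_iff:
  "Pd_feas m cm cp N u1 u2 w t1 t2 t3 \<longleftrightarrow> dual_feasible u1 u2 w \<and>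
     (\<forall>k<m. t1 k = 2 * barlen cm cp k \<and>
            t2 k = barlen cm cp k - (B1 cm cp u1 k + B2 cm cp u2 k) \<and> t3 k = - Dop cm cp w k)"
proof -
  have bar: "(0 \<le> t1 k \<and> 0 \<le> t2 k \<and>
       t2 k + B1 cm cp u1 k + B2 cm cp u2 k = barlen cm cp k \<and> t3 k + Dop cm cp w k = 0 \<and>
       t1 k = 2 * barlen cm cp k \<and> inK (t1 k) (t2 k) (t3 k)) \<longleftrightarrow>
     (t1 k = 2 * barlen cm cp k \<and> t2 k = barlen cm cp k - (B1 cm cp u1 k + B2 cm cp u2 k) \<and>
      t3 k = - Dop cm cp w k \<and> 0 \<le> dual_slack u1 u2 w k)" if "k < m" for k
  proof -
    have slack: "0 \<le> dual_slack u1 u2 w k \<longleftrightarrow>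
        inK (2 * barlen cm cp k) (barlen cm cp k - (B1 cm cp u1 k + B2 cm cp u2 k))
          (- Dop cm cp w k)"
      unfolding dual_slack_def by (rule inK_dual_iff[OF barlen_pos[OF that], symmetric])
    have eqs: "t2 k + B1 cm cp u1 k + B2 cm cp u2 k = barlen cm cp k \<longleftrightarrow>
        t2 k = barlen cm cp k - (B1 cm cp u1 k + B2 cm cp u2 k)"
      "t3 k + Dop cm cp w k = 0 \<longleftrightarrow> t3 k = - Dop cm cp w k" by linarith+
    show ?thesis unfolding slack eqs by (auto simp: inK_def)
  qed
  show ?thesis
    unfolding Pd_feas_def dual_feasible_def using bar by blast
qed

lemma dual_feasible_iff:
  "dual_feasible u1 u2 w \<longleftrightarrow> (\<exists>t1 t2 t3. Pd_feas m cm cp N u1 u2 w t1 t2 t3)"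
proof
  assume "dual_feasible u1 u2 w"
  then show "\<exists>t1 t2 t3. Pd_feas m cm cp N u1 u2 w t1 t2 t3"
    unfolding Pd_feas_iff by (intro exI[of _ "\<lambda>k. 2 * barlen cm cp k"]
        exI[of _ "\<lambda>k. barlen cm cp k - (B1 cm cp u1 k + B2 cm cp u2 k)"]
        exI[of _ "\<lambda>k. - Dop cm cp w k"]) simp
qed (auto simp: Pd_feas_iff)

lemma duality_gap:
  assumes "P_feas m cm cp N f s q r" "dual_feasible u1 u2 w"
  shows "P_obj m cm cp s r - loadwork N f w =
    (\<Sum>k<m. r k * (2 * barlen cm cp k) + s k * (barlen cm cp k - (B1 cm cp u1 k + B2 cm cp u2 k))
            + q k * - Dop cm cp w k)"
  using P_feas_virtual_work[OF assms(1)] assms(2)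
  by (simp add: dual_feasible_def P_obj_def internal_work_def algebra_simps
      sum_subtractf sum.distrib sum_distrib_left)

lemma weak_duality:
  assumes "P_feas m cm cp N f s q r" "dual_feasible u1 u2 w"
  shows "loadwork N f w \<le> P_obj m cm cp s r"
proof -
  have "0 \<le> (\<Sum>k<m. r k * (2 * barlen cm cp k)
      + s k * (barlen cm cp k - (B1 cm cp u1 k + B2 cm cp u2 k)) + q k * - Dop cm cp w k)"
    using assms(1) dual_feasible_inK[OF assms(2)]
    by (intro sum_nonneg inK_inner_nonneg) (auto simp: P_feas_def)
  then show ?thesis using duality_gap[OF assms] by simp
qed

subsection \<open>Strong duality\<close>

definition primal_optimal :: "(nat \<Rightarrow> real) \<Rightarrow> (nat \<Rightarrow> real) \<Rightarrow> (nat \<Rightarrow> real) \<Rightarrow> bool" where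
  "primal_optimal s q r \<longleftrightarrow> P_feas m cm cp N f s q r \<and>
     (\<forall>s' q' r'. P_feas m cm cp N f s' q' r' \<longrightarrow> P_obj m cm cp s r \<le> P_obj m cm cp s' r')"

definition dual_optimal :: "(real^2 \<Rightarrow> real) \<Rightarrow> (real^2 \<Rightarrow> real) \<Rightarrow> (real^2 \<Rightarrow> real) \<Rightarrow> bool" where
  "dual_optimal u1 u2 w \<longleftrightarrow> dual_feasible u1 u2 w \<and>
     (\<forall>u1' u2' w'. dual_feasible u1' u2' w' \<longrightarrow> loadwork N f w' \<le> loadwork N f w)"

lemma ZX_eq_primal_optimal: "primal_optimal s q r \<Longrightarrow> ZX m cm cp N f = P_obj m cm cp s r"
  unfolding ZX_def primal_optimal_def by (rule cInf_eq_minimum) auto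

lemma dual_feasible_strain_le:
  assumes "dual_feasible u1 u2 w" "k < m"
  shows "B1 cm cp u1 k + B2 cm cp u2 k \<le> barlen cm cp k"
  using dual_feasible_inK[OF assms] by (simp add: inK_def)

definition slack_deriv :: "(real^2 \<Rightarrow> real) \<Rightarrow> (real^2 \<Rightarrow> real) \<Rightarrow> (real^2 \<Rightarrow> real)
    \<Rightarrow> (real^2 \<Rightarrow> real) \<Rightarrow> (real^2 \<Rightarrow> real) \<Rightarrow> (real^2 \<Rightarrow> real) \<Rightarrow> nat \<Rightarrow> real" where
  "slack_deriv u1 u2 w d1 d2 d3 k =
     - 4 * barlen cm cp k * (B1 cm cp d1 k + B2 cm cp d2 k) - 2 * Dop cm cp w k * Dop cm cp d3 k"

lemma dual_slack_along:
  "dual_slack (\<lambda>p. u1 p + t * d1 p) (\<lambda>p. u2 p + t * d2 p) (\<lambda>p. w p + t * d3 p) k =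
   dual_slack u1 u2 w k + t * slack_deriv u1 u2 w d1 d2 d3 k - t^2 * (Dop cm cp d3 k)^2"
  unfolding dual_slack_def slack_deriv_def B1_def B2_def Dop_def
  by (simp add: divide_inverse power2_eq_square algebra_simps)

lemma slack_deriv_diff_scaled:
  "slack_deriv u1 u2 w (\<lambda>p. d1 p - c * e1 p) (\<lambda>p. d2 p - c * e2 p) (\<lambda>p. d3 p - c * e3 p) k =
   slack_deriv u1 u2 w d1 d2 d3 k - c * slack_deriv u1 u2 w e1 e2 e3 k"
  unfolding slack_deriv_def B1_def B2_def Dop_def by (simp add: divide_inverse algebra_simps)

lemma slack_deriv_self:
  "slack_deriv u1 u2 w u1 u2 w k =
    dual_slack u1 u2 w k - 4 * (barlen cm cp k)^2 - (Dop cm cp w k)^2"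
  unfolding slack_deriv_def dual_slack_def by (simp add: power2_eq_square algebra_simps)

lemma eventually_dual_feasible_along:
  assumes feas: "dual_feasible u1 u2 w" and adm: "admissible e1 e2 e3"
    and active: "\<And>k. k < m \<Longrightarrow> dual_slack u1 u2 w k = 0 \<Longrightarrow> 0 < slack_deriv u1 u2 w e1 e2 e3 k"
  shows "eventually (\<lambda>t. dual_feasible (\<lambda>p. u1 p + t * e1 p) (\<lambda>p. u2 p + t * e2 p)
      (\<lambda>p. w p + t * e3 p)) (at_right 0)"
proof -
  have "eventually (\<lambda>t. \<forall>k\<in>{..<m}. 0 \<le> dual_slack (\<lambda>p. u1 p + t * e1 p) (\<lambda>p. u2 p + t * e2 p)
      (\<lambda>p. w p + t * e3 p) k) (at_right 0)"
  proof (rule eventually_ball_finite, simp, intro ballI)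
    fix k assume k: "k \<in> {..<m}"
    show "eventually (\<lambda>t. 0 \<le> dual_slack (\<lambda>p. u1 p + t * e1 p) (\<lambda>p. u2 p + t * e2 p)
        (\<lambda>p. w p + t * e3 p) k) (at_right 0)"
      unfolding dual_slack_along
      using feas k active by (intro eventually_quadratic_nonneg) (simp_all add: dual_feasible_def)
  qed
  then show ?thesis
    by eventually_elim (use feas adm in \<open>simp add: dual_feasible_def nodevec_def\<close>)
qed

lemma dual_optimal_no_ascent:
  assumes opt: "dual_optimal u1 u2 w" and adm: "admissible d1 d2 d3"
    and active: "\<And>k. k < m \<Longrightarrow> dual_slack u1 u2 w k = 0 \<Longrightarrow> 0 \<le> slack_deriv u1 u2 w d1 d2 d3 k"
  shows "loadwork N f d3 \<le> 0"
proof (rule ccontr)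
  assume "\<not> loadwork N f d3 \<le> 0"
  then have gain: "0 < loadwork N f d3" by simp
  have "((\<lambda>\<epsilon>. \<epsilon> * loadwork N f w) \<longlongrightarrow> 0) (at_right 0)" by (auto intro!: tendsto_eq_intros)
  from order_tendstoD(2)[OF this gain] eventually_at_right_less
  have "eventually (\<lambda>\<epsilon>. 0 < \<epsilon> \<and> \<epsilon> * loadwork N f w < loadwork N f d3) (at_right 0)"
    by eventually_elim simp
  then obtain \<epsilon> where \<epsilon>: "0 < \<epsilon>" "\<epsilon> * loadwork N f w < loadwork N f d3"
    using eventually_happens'[OF trivial_limit_at_right_real] by blast
  \<comment> \<open>Slater: tilting d towards the origin, where every constraint is strict,
    makes the active constraints increase strictly\<close>
  define e1 where "e1 = (\<lambda>p. d1 p - \<epsilon> * u1 p)"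
  define e2 where "e2 = (\<lambda>p. d2 p - \<epsilon> * u2 p)"
  define e3 where "e3 = (\<lambda>p. d3 p - \<epsilon> * w p)"
  have feas: "dual_feasible u1 u2 w" using opt by (simp add: dual_optimal_def)
  have "0 < slack_deriv u1 u2 w e1 e2 e3 k" if k: "k < m" and act: "dual_slack u1 u2 w k = 0" for k
  proof -
    have "slack_deriv u1 u2 w e1 e2 e3 k =
        slack_deriv u1 u2 w d1 d2 d3 k + \<epsilon> * (4 * (barlen cm cp k)^2 + (Dop cm cp w k)^2)"
      by (simp add: e1_def e2_def e3_def slack_deriv_diff_scaled slack_deriv_self act algebra_simps)
    moreover have "0 < 4 * (barlen cm cp k)^2 + (Dop cm cp w k)^2"
      using barlen_pos[OF k] by (intro add_pos_nonneg) auto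
    ultimately show ?thesis using active[OF k act] \<epsilon>(1) by (simp add: add_nonneg_pos)
  qed
  with eventually_dual_feasible_along[OF feas] eventually_at_right_less
  have "eventually (\<lambda>t. 0 < t \<and> dual_feasible (\<lambda>p. u1 p + t * e1 p) (\<lambda>p. u2 p + t * e2 p)
      (\<lambda>p. w p + t * e3 p)) (at_right 0)"
    using feas adm
    by (intro eventually_conj) (auto simp: dual_feasible_def nodevec_def e1_def e2_def e3_def)
  then obtain t where t: "0 < t"
    "dual_feasible (\<lambda>p. u1 p + t * e1 p) (\<lambda>p. u2 p + t * e2 p) (\<lambda>p. w p + t * e3 p)"
    using eventually_happens'[OF trivial_limit_at_right_real] by blast
  then have "loadwork N f (\<lambda>p. w p + t * e3 p) \<le> loadwork N f w"
    using opt by (simp add: dual_optimal_def)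
  moreover have "loadwork N f (\<lambda>p. w p + t * e3 p) =
      loadwork N f w + t * (loadwork N f d3 - \<epsilon> * loadwork N f w)"
    by (simp add: e3_def loadwork_add_scaled loadwork_diff_scaled)
  moreover have "0 < t * (loadwork N f d3 - \<epsilon> * loadwork N f w)" using t(1) \<epsilon>(2) by simp
  ultimately show False by linarith
qed

lemma dual_optimal_kkt:
  assumes opt: "dual_optimal u1 u2 w"
  obtains \<mu> where "\<And>k. k < m \<Longrightarrow> 0 \<le> \<mu> k" "\<And>k. \<mu> k * dual_slack u1 u2 w k = 0"
    "\<And>d1 d2 d3. admissible d1 d2 d3 \<Longrightarrow>
       loadwork N f d3 = (\<Sum>k<m. - \<mu> k * slack_deriv u1 u2 w d1 d2 d3 k)"
proof -
  define V where "V = {(d1, d2, d3). admissible d1 d2 d3}"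
  define comb :: "real \<Rightarrow> _ \<Rightarrow> _ \<Rightarrow> (real^2 \<Rightarrow> real) \<times> (real^2 \<Rightarrow> real) \<times> (real^2 \<Rightarrow> real)"
    where "comb = (\<lambda>c (x1, x2, x3) (y1, y2, y3).
      (\<lambda>p. x1 p - c * y1 p, \<lambda>p. x2 p - c * y2 p, \<lambda>p. x3 p - c * y3 p))"
  define active where "active k \<longleftrightarrow> dual_slack u1 u2 w k = 0" for k
  define a where "a = (\<lambda>k (d1, d2, d3). if active k then slack_deriv u1 u2 w d1 d2 d3 k else 0)"
  define \<phi> where "\<phi> = (\<lambda>(d1 :: real^2 \<Rightarrow> real, d2 :: real^2 \<Rightarrow> real, d3). - loadwork N f d3)"
  have "farkas_dichotomy V m a \<phi>"
  proof (rule farkas_alternative[where comb = comb])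
    show "comb c x y \<in> V" if "x \<in> V" "y \<in> V" for c x y
      using that by (cases x rule: prod_cases3, cases y rule: prod_cases3)
        (simp add: V_def comb_def nodevec_def)
    show "\<forall>k<m. comb_linear_on V comb (a k)" "comb_linear_on V comb \<phi>"
      unfolding comb_linear_on_def
      by (auto simp: a_def \<phi>_def comb_def slack_deriv_diff_scaled loadwork_diff_scaled)
  qed
  moreover have "\<not> (\<phi> (d1, d2, d3) < 0)"
    if "admissible d1 d2 d3" "\<forall>k<m. 0 \<le> a k (d1, d2, d3)" for d1 d2 d3
  proof -
    have "loadwork N f d3 \<le> 0"
    proof (rule dual_optimal_no_ascent[OF opt that(1)])
      fix k assume "k < m" "dual_slack u1 u2 w k = 0"
      with that(2)[rule_format, of k] show "0 \<le> slack_deriv u1 u2 w d1 d2 d3 k"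
        by (simp add: a_def active_def)
    qed
    then show ?thesis by (simp add: \<phi>_def)
  qed
  ultimately obtain y where y: "\<forall>k<m. 0 \<le> y k" "\<forall>d\<in>V. \<phi> d = (\<Sum>k<m. y k * a k d)"
    unfolding farkas_dichotomy_def V_def by blast
  show thesis
  proof
    show "0 \<le> (if active k then y k else 0)" if "k < m" for k using y(1) that by simp
    show "(if active k then y k else 0) * dual_slack u1 u2 w k = 0" for k by (simp add: active_def)
    show "loadwork N f d3 =
        (\<Sum>k<m. - (if active k then y k else 0) * slack_deriv u1 u2 w d1 d2 d3 k)"
      if "admissible d1 d2 d3" for d1 d2 d3
    proof -
      have "- loadwork N f d3 = (\<Sum>k<m. y k * a k (d1, d2, d3))"
        using y(2) that by (simp add: V_def \<phi>_def)
      also have "\<dots> = (\<Sum>k<m. (if active k then y k else 0) * slack_deriv u1 u2 w d1 d2 d3 k)"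
        by (rule sum.cong) (simp_all add: a_def)
      finally show ?thesis by (simp add: sum_negf)
    qed
  qed
qed

lemma dual_optimal_primal_witness:
  assumes opt: "dual_optimal u1 u2 w"
  obtains s q r where "P_feas m cm cp N f s q r" "P_obj m cm cp s r = loadwork N f w"
proof -
  obtain \<mu> where \<mu>: "\<And>k. k < m \<Longrightarrow> 0 \<le> \<mu> k" "\<And>k. \<mu> k * dual_slack u1 u2 w k = 0"
    and kkt: "\<And>d1 d2 d3. admissible d1 d2 d3 \<Longrightarrow>
       loadwork N f d3 = (\<Sum>k<m. - \<mu> k * slack_deriv u1 u2 w d1 d2 d3 k)"
    using dual_optimal_kkt[OF opt] by blast
  have feas: "dual_feasible u1 u2 w" using opt by (simp add: dual_optimal_def)
  then have adm: "admissible u1 u2 w" by (simp add: dual_feasible_def)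
  define s where "s = (\<lambda>k. 4 * \<mu> k * barlen cm cp k)"
  define q where "q = (\<lambda>k. 2 * \<mu> k * Dop cm cp w k)"
  define r where "r = (\<lambda>k. 2 * \<mu> k * (barlen cm cp k - (B1 cm cp u1 k + B2 cm cp u2 k)))"
  have "internal_work s q d1 d2 d3 = loadwork N f d3" if "admissible d1 d2 d3" for d1 d2 d3
    unfolding kkt[OF that] internal_work_def
    by (rule sum.cong) (simp_all add: s_def q_def slack_deriv_def algebra_simps)
  moreover have "inK (r k) (s k) (q k)" if "k < m" for k
  proof -
    have "2 * r k * s k - (q k)^2 = 4 * (\<mu> k)^2 * dual_slack u1 u2 w k"
      by (simp add: r_def s_def q_def dual_slack_def power2_eq_square algebra_simps)
    moreover have "0 \<le> 4 * (\<mu> k)^2 * dual_slack u1 u2 w k"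
      using feas that by (simp add: dual_feasible_def)
    moreover have "0 \<le> r k" "0 \<le> s k"
      using \<mu>(1)[OF that] barlen_pos[OF that] dual_feasible_strain_le[OF feas that]
      by (simp_all add: r_def s_def)
    ultimately show ?thesis by (simp add: inK_def)
  qed
  ultimately have primal: "P_feas m cm cp N f s q r"
    unfolding P_feas_def equilibrium_iff_virtual_work by (simp add: inK_def)
  have "P_obj m cm cp s r - loadwork N f w = (\<Sum>k<m. 2 * (\<mu> k * dual_slack u1 u2 w k))"
    unfolding kkt[OF adm] P_obj_def
    by (simp add: s_def r_def slack_deriv_self dual_slack_def sum_distrib_left sum_subtractf
        sum.distrib[symmetric] power2_eq_square algebra_simps)
  then have "P_obj m cm cp s r = loadwork N f w" using \<mu>(2) by simp
  with primal show thesis by (rule that)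
qed

theorem strong_duality:
  assumes "primal_optimal s q r" "dual_optimal u1 u2 w"
  shows "P_obj m cm cp s r = loadwork N f w"
proof -
  obtain s' q' r' where "P_feas m cm cp N f s' q' r'" "P_obj m cm cp s' r' = loadwork N f w"
    using dual_optimal_primal_witness[OF assms(2)] by blast
  then have "P_obj m cm cp s r \<le> loadwork N f w"
    using assms(1) unfolding primal_optimal_def by metis
  moreover have "loadwork N f w \<le> P_obj m cm cp s r"
    using assms unfolding primal_optimal_def dual_optimal_def by (blast intro: weak_duality)
  ultimately show ?thesis by simp
qed

lemma zero_gap_complementarity:
  assumes "P_feas m cm cp N f s q r" "dual_feasible u1 u2 w"
    and gap: "P_obj m cm cp s r = loadwork N f w" and k: "k < m"
  shows "2 * barlen cm cp k * q k = s k * Dop cm cp w k"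
    and "8 * r k * (barlen cm cp k)^2 = s k * (Dop cm cp w k)^2"
    and "0 < s k \<Longrightarrow> dual_slack u1 u2 w k = 0"
proof -
  define t2 where "t2 = (\<lambda>k. barlen cm cp k - (B1 cm cp u1 k + B2 cm cp u2 k))"
  have cones: "inK (r k) (s k) (q k)" "inK (2 * barlen cm cp k) (t2 k) (- Dop cm cp w k)"
    if "k < m" for k
    using assms(1) dual_feasible_inK[OF assms(2) that] that by (simp_all add: P_feas_def t2_def)
  define T where "T = (\<lambda>k. r k * (2 * barlen cm cp k) + s k * t2 k + q k * - Dop cm cp w k)"
  have "sum T {..<m} = 0"
    using duality_gap[OF assms(1,2)] gap by (simp add: T_def t2_def)
  moreover have "0 \<le> T k" if "k \<in> {..<m}" for k
    using inK_inner_nonneg[OF cones(1)[of k] cones(2)[of k]] that by (simp add: T_def)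
  ultimately have "T k = 0" using k sum_nonneg_eq_0_iff[of "{..<m}" T] by simp
  then have "r k * (2 * barlen cm cp k) + s k * t2 k + q k * - Dop cm cp w k = 0"
    by (simp add: T_def)
  note C = inK_complementarity[OF cones[OF k] _ this]
  have l: "0 < 2 * barlen cm cp k" using barlen_pos[OF k] by simp
  show "2 * barlen cm cp k * q k = s k * Dop cm cp w k"
    using C(1)[OF l] by (simp add: algebra_simps)
  show "8 * r k * (barlen cm cp k)^2 = s k * (Dop cm cp w k)^2"
    using C(2)[OF l] by (simp add: power2_eq_square algebra_simps)
  show "dual_slack u1 u2 w k = 0" if "0 < s k"
    using C(3)[OF l that] by (simp add: dual_slack_def t2_def algebra_simps)
qed

lemma dual_optimal_iff_Pd_optimal:
  "dual_optimal u1 u2 w \<longleftrightarrow> (\<exists>t1 t2 t3. Pd_feas m cm cp N u1 u2 w t1 t2 t3 \<and>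
     (\<forall>u1' u2' w' t1' t2' t3'. Pd_feas m cm cp N u1' u2' w' t1' t2' t3' \<longrightarrow>
        loadwork N f w' \<le> loadwork N f w))"
  unfolding dual_optimal_def dual_feasible_iff by blast

lemma strainhat_le_one:
  assumes k: "k < m" and slack: "0 \<le> dual_slack u1 u2 w k"
  shows "strainhat cm cp u1 u2 w z k \<le> 1"
proof -
  define l where "l = barlen cm cp k"
  define \<delta> where "\<delta> = Delta cm cp z k"
  define g where "g = Delta cm cp w k"
  have l: "0 < l" using barlen_pos[OF k] by (simp add: l_def)
  have "g^2 / 4 \<le> 1 - strain cm cp u1 u2 k"
  proof -
    have "(Dop cm cp w k)^2 / (4 * l^2) \<le> 4 * l * (l - (B1 cm cp u1 k + B2 cm cp u2 k)) / (4 * l^2)"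
      using slack by (intro divide_right_mono) (simp_all add: dual_slack_def l_def)
    also have "\<dots> = 1 - strain cm cp u1 u2 k"
      using l by (simp add: strain_def l_def field_simps power2_eq_square)
    finally show ?thesis by (simp add: g_def Delta_def l_def power_divide)
  qed
  moreover have "4 * (\<delta> * g) \<le> 4 * \<delta>^2 + g^2"
    using zero_le_power2[of "2 * \<delta> - g"] by (simp add: power2_eq_square algebra_simps)
  ultimately have "strain cm cp u1 u2 k + \<delta> * g \<le> 1 + \<delta>^2" by linarith
  then show ?thesis
    by (simp add: strainhat_def \<delta>_def g_def add_pos_nonneg)
qed

lemma strainhat_half_eq_one:
  assumes k: "k < m" and active: "dual_slack u1 u2 w k = 0"
  shows "strainhat cm cp u1 u2 w (\<lambda>x. w x / 2) k = 1"
proof -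
  define l where "l = barlen cm cp k"
  define g where "g = Delta cm cp w k"
  have l: "0 < l" using barlen_pos[OF k] by (simp add: l_def)
  have "(Dop cm cp w k)^2 / (4 * l^2) = 4 * l * (l - (B1 cm cp u1 k + B2 cm cp u2 k)) / (4 * l^2)"
    using active by (simp add: dual_slack_def l_def)
  also have "\<dots> = 1 - strain cm cp u1 u2 k"
    using l by (simp add: strain_def l_def field_simps power2_eq_square)
  finally have "strain cm cp u1 u2 k = 1 - g^2 / 4"
    by (simp add: g_def Delta_def l_def power_divide)
  then have "strain cm cp u1 u2 k + g / 2 * g = 1 + (g / 2)^2"
    by (simp add: power2_eq_square)
  moreover have "0 < 1 + (g / 2)^2" by (simp add: add_pos_nonneg)
  ultimately show ?thesis
    by (simp add: strainhat_def Delta_half g_def)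
qed

lemma lhat_mult_strainhat:
  assumes "k < m"
  shows "lhat cm cp z k * strainhat cm cp u1 u2 w z k =
    (B1 cm cp u1 k + B2 cm cp u2 k + Delta cm cp z k * Dop cm cp w k) / Jd cm cp z k"
proof -
  have l: "barlen cm cp k \<noteq> 0" using barlen_pos[OF assms] by simp
  have J: "Jd cm cp z k \<noteq> 0" using Jd_pos[of cm cp z k] by simp
  show ?thesis
    unfolding lhat_def strainhat_def strain_def Delta_def[of cm cp w] Jd_sq[symmetric]
    using l J by (simp add: field_simps power2_eq_square)
qed

lemma stress_feas_virtual_work:
  assumes "stress_feas m cm cp N f z sh" "admissible u1 u2 w"
  shows "loadwork N f w = (\<Sum>k<m. sh k * lhat cm cp z k * strainhat cm cp u1 u2 w z k)"
proof -
  have "loadwork N f w = internal_work (\<lambda>k. sh k / Jd cm cp z k)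
      (\<lambda>k. Delta cm cp z k * sh k / Jd cm cp z k) u1 u2 w"
    using assms equilibrium_iff_virtual_work by (simp add: stress_feas_def Let_def)
  also have "\<dots> = (\<Sum>k<m. sh k * lhat cm cp z k * strainhat cm cp u1 u2 w z k)"
    unfolding internal_work_def
    by (rule sum.cong)
      (simp_all add: mult.assoc lhat_mult_strainhat algebra_simps add_divide_distrib)
  finally show ?thesis .
qed

lemma disp_obj_le_stress_obj:
  assumes sf: "stress_feas m cm cp N f z sh" and a: "\<forall>k<m. 0 \<le> a k" and E0: "0 < E0"
    and adm: "admissible u1 u2 w"
  shows "ereal (disp_obj m cm cp N f E0 z a u1 u2 w) \<le> stress_obj m cm cp E0 z a sh"
proof -
  define e where "e = strainhat cm cp u1 u2 w z"
  have sh: "k < m \<Longrightarrow> 0 \<le> sh k" for k using sf by (simp add: stress_feas_def)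
  have "disp_obj m cm cp N f E0 z a u1 u2 w =
      (\<Sum>k<m. lhat cm cp z k * (sh k * e k - E0 / 2 * (max 0 (e k))^2 * a k))"
    unfolding disp_obj_def stress_feas_virtual_work[OF sf adm]
    by (simp add: e_def sum_subtractf sum_distrib_left algebra_simps)
  then have "ereal (disp_obj m cm cp N f E0 z a u1 u2 w) =
      (\<Sum>k<m. ereal (lhat cm cp z k * (sh k * e k - E0 / 2 * (max 0 (e k))^2 * a k)))"
    by simp
  also have "\<dots> \<le> (\<Sum>k<m. ereal (1 / (2 * E0)) * (qdiv ((sh k)^2) (a k) * ereal (lhat cm cp z k)))"
    using sh a E0 lhat_nonneg by (intro sum_mono bar_energy_le_qdiv) auto
  also have "\<dots> = stress_obj m cm cp E0 z a sh"
    unfolding stress_obj_def using a lhat_nonneg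
    by (intro sum_ereal_right_distrib[symmetric]) (auto simp: qdiv_def)
  finally show ?thesis .
qed

lemma compliance_le_stress_obj:
  assumes "stress_feas m cm cp N f z sh" "\<forall>k<m. 0 \<le> a k" "0 < E0"
  shows "compliance m cm cp N f E0 z a \<le> stress_obj m cm cp E0 z a sh"
  unfolding compliance_def using disp_obj_le_stress_obj[OF assms] by (intro SUP_least) auto

end

section \<open>The optimal design\<close>

locale optimal_design = ground_structure +
  fixes s q r :: "nat \<Rightarrow> real" and u1 u2 w :: "real^2 \<Rightarrow> real" and E0 V0 :: real
  assumes primal: "primal_optimal s q r"
    and dual: "dual_optimal u1 u2 w"
    and E0_pos: "0 < E0" and V0_pos: "0 < V0"
    and ZX_pos: "0 < ZX m cm cp N f"
begin

abbreviation Z :: real where "Z \<equiv> ZX m cm cp N f"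

abbreviation shape :: "real^2 \<Rightarrow> real" where "shape \<equiv> \<lambda>x. w x / 2"

abbreviation stress :: "nat \<Rightarrow> real" where "stress \<equiv> \<lambda>k. Jd cm cp shape k * s k"

abbreviation areas :: "nat \<Rightarrow> real" where "areas \<equiv> \<lambda>k. V0 / Z * (Jd cm cp shape k * s k)"

abbreviation u1el :: "real^2 \<Rightarrow> real" where "u1el \<equiv> \<lambda>x. Z / (E0 * V0) * u1 x"
abbreviation u2el :: "real^2 \<Rightarrow> real" where "u2el \<equiv> \<lambda>x. Z / (E0 * V0) * u2 x"
abbreviation wel :: "real^2 \<Rightarrow> real" where "wel \<equiv> \<lambda>x. Z / (E0 * V0) * w x"

lemma primal_is_feasible: "P_feas m cm cp N f s q r"
  using primal by (simp add: primal_optimal_def)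

lemma dual_is_feasible: "dual_feasible u1 u2 w"
  using dual by (simp add: dual_optimal_def)

lemma s_nonneg: "k < m \<Longrightarrow> 0 \<le> s k"
  using primal_is_feasible by (simp add: P_feas_def)

lemma Z_eq_P_obj: "Z = P_obj m cm cp s r"
  using ZX_eq_primal_optimal[OF primal] .

lemma Z_eq_loadwork: "Z = loadwork N f w"
  using strong_duality[OF primal dual] Z_eq_P_obj by simp

lemma optimal_bar_identities:
  assumes k: "k < m"
  shows "q k = Delta cm cp shape k * s k"
    and "stress k * lhat cm cp shape k = barlen cm cp k * s k + 2 * (barlen cm cp k * r k)"
    and "0 < s k \<Longrightarrow> strainhat cm cp u1 u2 w shape k = 1"
proof -
  note C = zero_gap_complementarity[OF primal_is_feasible dual_is_feasible
      strong_duality[OF primal dual] k]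
  define l where "l = barlen cm cp k"
  have l: "0 < l" using barlen_pos[OF k] by (simp add: l_def)
  have \<Delta>: "Delta cm cp shape k = Dop cm cp w k / (2 * l)"
    by (simp add: Delta_half Delta_def l_def)
  show "q k = Delta cm cp shape k * s k"
    using C(1) l unfolding \<Delta> by (simp add: l_def field_simps)
  have "stress k * lhat cm cp shape k = (Jd cm cp shape k)^2 * l * s k"
    by (simp add: lhat_def l_def power2_eq_square)
  also have "\<dots> = (1 + (Delta cm cp shape k)^2) * l * s k"
    by (simp only: Jd_sq)
  also have "\<dots> = l * s k + 2 * (l * r k)"
    using C(2) l unfolding \<Delta> by (simp add: l_def field_simps power2_eq_square)
  finally show "stress k * lhat cm cp shape k = barlen cm cp k * s k + 2 * (barlen cm cp k * r k)"
    by (simp add: l_def)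
  show "strainhat cm cp u1 u2 w shape k = 1" if "0 < s k"
    using strainhat_half_eq_one[OF k C(3)[OF that]] .
qed

lemma sum_stress_lhat: "(\<Sum>k<m. stress k * lhat cm cp shape k) = Z"
  using Z_eq_P_obj optimal_bar_identities(2)
  by (simp add: P_obj_def sum.distrib sum_distrib_left)

lemma stress_nonneg: "\<forall>k<m. 0 \<le> stress k"
  using s_nonneg Jd_pos[of cm cp shape] by (simp add: less_imp_le)

lemma areas_nonneg: "\<forall>k<m. 0 \<le> areas k"
  using stress_nonneg ZX_pos V0_pos by simp

lemma design_feasible: "MCGS_feas m cm cp N V0 shape areas"
proof -
  have "nodevec N shape" using dual_is_feasible by (simp add: dual_feasible_def nodevec_def)
  moreover note areas_nonneg
  moreover have "(\<Sum>k<m. areas k * lhat cm cp shape k) =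
      V0 / Z * (\<Sum>k<m. stress k * lhat cm cp shape k)"
    by (simp add: sum_distrib_left mult.assoc)
  ultimately show ?thesis using sum_stress_lhat ZX_pos by (simp add: MCGS_feas_def)
qed

lemma stress_feasible: "stress_feas m cm cp N f shape stress"
proof -
  have "(\<lambda>k. stress k / Jd cm cp shape k) = s"
    using Jd_pos[of cm cp shape] by (simp add: fun_eq_iff less_imp_neq[symmetric])
  moreover have "DT m cm cp (\<lambda>k. Delta cm cp shape k * stress k / Jd cm cp shape k) = DT m cm cp q"
    unfolding DT_def using Jd_pos[of cm cp shape] optimal_bar_identities(1)
    by (intro ext sum.cong) (simp_all add: less_imp_neq[symmetric])
  ultimately show ?thesis
    using primal_is_feasible stress_nonneg by (simp add: stress_feas_def P_feas_def Let_def)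
qed

lemma stress_obj_design: "stress_obj m cm cp E0 shape areas stress = ereal (Z^2 / (2 * E0 * V0))"
proof -
  have "qdiv ((stress k)^2) (areas k) * ereal (lhat cm cp shape k) =
      ereal (Z / V0 * (stress k * lhat cm cp shape k))" if "k < m" for k
  proof (cases "s k = 0")
    case False
    then have "areas k \<noteq> 0" using Jd_pos[of cm cp shape k] ZX_pos V0_pos by simp
    moreover have "(stress k)^2 / areas k = Z / V0 * stress k"
      using False Jd_pos[of cm cp shape k] ZX_pos V0_pos by (simp add: field_simps power2_eq_square)
    ultimately show ?thesis by (simp add: qdiv_def)
  qed (simp add: qdiv_def)
  then have "(\<Sum>k<m. qdiv ((stress k)^2) (areas k) * ereal (lhat cm cp shape k)) =
      (\<Sum>k<m. ereal (Z / V0 * (stress k * lhat cm cp shape k)))"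
    by (intro sum.cong) simp_all
  also have "\<dots> = ereal (Z / V0 * Z)"
    by (simp only: sum_ereal sum_distrib_left[symmetric] sum_stress_lhat)
  finally have "(\<Sum>k<m. qdiv ((stress k)^2) (areas k) * ereal (lhat cm cp shape k)) =
      ereal (Z / V0 * Z)" .
  then show ?thesis
    using E0_pos V0_pos by (simp add: stress_obj_def power2_eq_square)
qed

lemma elastic_admissible: "admissible u1el u2el wel"
  using dual_is_feasible by (simp add: dual_feasible_def nodevec_def)

lemma disp_obj_elastic_ge:
  assumes "MCGS_feas m cm cp N V0 z' a'"
  shows "Z^2 / (2 * E0 * V0) \<le> disp_obj m cm cp N f E0 z' a' u1el u2el wel"
proof -
  define c where "c = Z / (E0 * V0)"
  have c: "0 \<le> c" using ZX_pos E0_pos V0_pos by (simp add: c_def)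
  have "strainhat cm cp u1el u2el wel z' k \<le> c" if "k < m" for k
  proof -
    have "strainhat cm cp u1 u2 w z' k \<le> 1"
      using strainhat_le_one[OF that] dual_is_feasible that by (simp add: dual_feasible_def)
    then show ?thesis
      unfolding c_def strainhat_scale by (rule mult_left_le[OF _ c[unfolded c_def]])
  qed
  then have "loadwork N f wel - E0 / 2 * c^2 * V0 \<le> disp_obj m cm cp N f E0 z' a' u1el u2el wel"
    using assms E0_pos c by (intro disp_obj_ge) (auto simp: MCGS_feas_def c_def)
  moreover have "loadwork N f wel = c * Z"
    unfolding loadwork_scale c_def by (simp only: Z_eq_loadwork[symmetric])
  moreover have "c * Z - E0 / 2 * c^2 * V0 = Z^2 / (2 * E0 * V0)"
    using E0_pos V0_pos by (simp add: c_def power2_eq_square field_simps)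
  ultimately show ?thesis by simp
qed

lemma compliance_ge:
  assumes "MCGS_feas m cm cp N V0 z' a'"
  shows "ereal (Z^2 / (2 * E0 * V0)) \<le> compliance m cm cp N f E0 z' a'"
  unfolding compliance_def using disp_obj_elastic_ge[OF assms] elastic_admissible
  by (intro SUP_upper2[of "(u1el, u2el, wel)"]) auto

lemma compliance_design: "compliance m cm cp N f E0 shape areas = ereal (Z^2 / (2 * E0 * V0))"
proof (rule antisym)
  show "compliance m cm cp N f E0 shape areas \<le> ereal (Z^2 / (2 * E0 * V0))"
    using compliance_le_stress_obj[OF stress_feasible areas_nonneg E0_pos]
    unfolding stress_obj_design .
qed (rule compliance_ge[OF design_feasible])

lemma design_optimal:
  "MCGS_feas m cm cp N V0 z' a' \<Longrightarrow>
    compliance m cm cp N f E0 shape areas \<le> compliance m cm cp N f E0 z' a'"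
  using compliance_ge compliance_design by simp

lemma Cmin_eq: "Cmin m cm cp N f E0 V0 = ereal (Z^2 / (2 * E0 * V0))"
  unfolding Cmin_def
proof (rule antisym)
  show "(INF za\<in>{(z, a). MCGS_feas m cm cp N V0 z a}. compliance m cm cp N f E0 (fst za) (snd za))
      \<le> ereal (Z^2 / (2 * E0 * V0))"
    using design_feasible compliance_design by (intro INF_lower2[of "(shape, areas)"]) auto
qed (use compliance_ge in \<open>auto intro: INF_greatest\<close>)

lemma elastic_displacement_optimal:
  assumes "admissible u1' u2' w'"
  shows "disp_obj m cm cp N f E0 shape areas u1' u2' w' \<le>
    disp_obj m cm cp N f E0 shape areas u1el u2el wel"
proof -
  have "ereal (disp_obj m cm cp N f E0 shape areas u1' u2' w') \<le> ereal (Z^2 / (2 * E0 * V0))"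
    using disp_obj_le_stress_obj[OF stress_feasible areas_nonneg E0_pos assms]
    unfolding stress_obj_design .
  then show ?thesis using disp_obj_elastic_ge[OF design_feasible] by simp
qed

lemma stress_optimal:
  assumes "stress_feas m cm cp N f shape sh'"
  shows "stress_obj m cm cp E0 shape areas stress \<le> stress_obj m cm cp E0 shape areas sh'"
  using compliance_le_stress_obj[OF assms areas_nonneg E0_pos]
  unfolding stress_obj_design compliance_design .

lemma strainhat_elastic: "k < m \<Longrightarrow> 0 < s k \<Longrightarrow> strainhat cm cp u1el u2el wel shape k = Z / (E0 * V0)"
  unfolding strainhat_scale using optimal_bar_identities(3) by simp

lemma strainhat_elastic_active:
  "k < m \<Longrightarrow> areas k \<noteq> 0 \<Longrightarrow> strainhat cm cp u1el u2el wel shape k = Z / (E0 * V0)"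
  using strainhat_elastic s_nonneg by (fastforce simp: less_le)

lemma hooke_law: "k < m \<Longrightarrow> stress k = E0 * areas k * strainhat cm cp u1el u2el wel shape k"
  using strainhat_elastic s_nonneg E0_pos V0_pos ZX_pos by (cases "s k = 0") (auto simp: less_le)

end

theorem theorem6p3:
  fixes \<Omega> :: "(real^2) set" and X :: "(real^2) set"
    and f :: "real^2 \<Rightarrow> real" and E0 V0 :: real
    and m :: nat and cm cp :: "nat \<Rightarrow> real^2"
    and s q r :: "nat \<Rightarrow> real" and u1 u2 w :: "real^2 \<Rightarrow> real"
  assumes domain: "open \<Omega>" "connected \<Omega>" "\<Omega> \<noteq> {}" "bounded \<Omega>"
    and X_fin: "finite X" and X_sub: "X \<subseteq> closure \<Omega>"
    and X_int: "X - frontier \<Omega> \<subseteq> interior (convex hull (X \<inter> frontier \<Omega>))"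
    and m_def: "m = card X * (card X - 1) div 2"
    and bars: "bij_betw (\<lambda>k. {cm k, cp k}) {..<m} {{x, y} | x y. x \<in> X \<and> y \<in> X \<and> x \<noteq> y}"
    and E0: "E0 > 0" and V0: "V0 > 0"
    and Zpos: "ZX m cm cp (X - frontier \<Omega>) f > 0"
    and Psol: "P_feas m cm cp (X - frontier \<Omega>) f s q r"
              "\<forall>s' q' r'. P_feas m cm cp (X - frontier \<Omega>) f s' q' r' \<longrightarrow>
                  P_obj m cm cp s r \<le> P_obj m cm cp s' r'"
    and Pdsol: "\<exists>t1 t2 t3. Pd_feas m cm cp (X - frontier \<Omega>) u1 u2 w t1 t2 t3 \<and>
                 (\<forall>u1' u2' w' t1' t2' t3'. Pd_feas m cm cp (X - frontier \<Omega>) u1' u2' w' t1' t2' t3' \<longrightarrow>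
                    loadwork (X - frontier \<Omega>) f w' \<le> loadwork (X - frontier \<Omega>) f w)"
  shows
    "let N = X - frontier \<Omega>;
         Z = ZX m cm cp N f;
         z = (\<lambda>x. w x / 2);
         a = (\<lambda>k. V0 / Z * (Jd cm cp z k * s k));
         u1el = (\<lambda>x. Z / (E0 * V0) * u1 x);
         u2el = (\<lambda>x. Z / (E0 * V0) * u2 x);
         wel = (\<lambda>x. Z / (E0 * V0) * w x);
         sh = (\<lambda>k. Jd cm cp z k * s k)
     in
       \<comment> \<open>(z, a) solves (MCGS_X), with the stated optimal value\<close>
       MCGS_feas m cm cp N V0 z a \<and>
       (\<forall>z' a'. MCGS_feas m cm cp N V0 z' a' \<longrightarrow>
          compliance m cm cp N f E0 z a \<le> compliance m cm cp N f E0 z' a') \<and>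
       Cmin m cm cp N f E0 V0 = ereal (Z ^ 2 / (2 * E0 * V0)) \<and>
       \<comment> \<open>the scaled displacements solve the displacement-based problem\<close>
       nodevec N u1el \<and> nodevec N u2el \<and> nodevec N wel \<and>
       (\<forall>u1' u2' w'. nodevec N u1' \<and> nodevec N u2' \<and> nodevec N w' \<longrightarrow>
          disp_obj m cm cp N f E0 z a u1' u2' w' \<le> disp_obj m cm cp N f E0 z a u1el u2el wel) \<and>
       \<comment> \<open>sh solves the stress-based problem\<close>
       stress_feas m cm cp N f z sh \<and>
       (\<forall>sh'. stress_feas m cm cp N f z sh' \<longrightarrow>
          stress_obj m cm cp E0 z a sh \<le> stress_obj m cm cp E0 z a sh') \<and>
       \<comment> \<open>constant strain in active bars, and Hooke's law\<close>
       (\<forall>k<m. a k \<noteq> 0 \<longrightarrow> strainhat cm cp u1el u2el wel z k = Z / (E0 * V0)) \<and>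
       (\<forall>k<m. sh k = E0 * a k * strainhat cm cp u1el u2el wel z k)"
proof -
  \<comment> \<open>of the hypotheses on \<open>\<Omega>\<close> and \<open>X\<close>, only finiteness and non-degenerate bars are needed\<close>
  interpret ground_structure m cm cp "X - frontier \<Omega>" f
    using X_fin bars_barlen_pos[OF bars] by unfold_locales auto
  interpret optimal_design m cm cp "X - frontier \<Omega>" f s q r u1 u2 w E0 V0
    using Psol Pdsol E0 V0 Zpos
    by unfold_locales (simp_all add: primal_optimal_def dual_optimal_iff_Pd_optimal)
  show ?thesis
    unfolding Let_def
    using design_feasible design_optimal Cmin_eq elastic_admissible elastic_displacement_optimal
      stress_feasible stress_optimal strainhat_elastic_active hooke_law
    by blast
qed

end
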